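(* The sets $H_\pm$ intersect $\partial(T^*E_{2\delta_0}\times\mathbb{R})\subset J^1(S)$ transversely. Moreover, $H_\pm(2\delta_0)$ is invariant under the Reeb flow of $dz-p\,dq$, and its projection $\overline H_\pm(2\delta_0)\subset T^*E_{2\delta_0}$ is a smooth $J_0$-complex subvariety.
   Context: $\alpha_0=dx_3-x_2\,dx_1+x_1\,dx_2$ on $\mathbb{R}^3$. Fix $\delta_0>0$ and let $S\subset\mathbb{R}^3$ be the smooth boundary of a compact convex set containing the origin in its interior, symmetric under reflection in the $y_1y_2$-plane and rotations about the $y_3$-axis, such that $S\cap\{y_1^2+y_2^2\le 9\delta_0^2\}=\{(y_1,y_2,\pm1): y_1^2+y_2^2\le 9\delta_0^2\}$; $\nu$ is the outward unit normal. For $0<k<3$ put $E_{k\delta_0}=\{(y_1,y_2,\pm1): y_1^2+y_2^2\le k^2\delta_0^2\}\subset S$. $S^*\mathbb{R}^3=\mathbb{R}^3\times S$ (contact form $y\cdot dx$) is identified with $J^1(S)=T^*S\times\mathbb{R}$ (contact form $dz-p\,dq$, $p\in T_qS$) via $(x,y)\mapsto(y,x-(x\cdot\nu(y))\nu(y),x\cdot y)$. $H_\pm=\{(x,y)\in S^*\mathbb{R}^3: y=t(-x_2,x_1,1),\ \pm t>0\}$, viewed in $J^1(S)$; $H_\pm(k\delta_0)=H_\pm\cap(T^*E_{k\delta_0}\times\mathbb{R})$; bars denote images under the projection $J^1(S)\to T^*S$. $J_0$ is the standard integrable complex structure on $T^*E_{3\delta_0}$ via the identification $((u_1,u_2,\pm1),(v_1,v_2,0))\mapsto(u_1+iv_1,u_2+iv_2)\in\mathbb{C}^2$.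 *)

theory Defs
  imports "HOL-Analysis.Analysis"
begin

definition refl3 :: "real^3 \<Rightarrow> real^3" where
  "refl3 y = vector [y$1, y$2, - y$3]"

definition rot3 :: "real \<Rightarrow> real^3 \<Rightarrow> real^3" where
  "rot3 \<theta> y = vector [cos \<theta> * y$1 - sin \<theta> * y$2, sin \<theta> * y$1 + cos \<theta> * y$2, y$3]"

definition partial3 :: "3 \<Rightarrow> (real^3 \<Rightarrow> real) \<Rightarrow> real^3 \<Rightarrow> real" where
  "partial3 i f x = (SOME d. ((\<lambda>t. f (x + t *\<^sub>R axis i 1)) has_real_derivative d) (at 0))"

definition smooth_on3 :: "(real^3) set \<Rightarrow> (real^3 \<Rightarrow> real) \<Rightarrow> bool" where
  "smooth_on3 U f \<longleftrightarrow> (\<forall>is. foldr partial3 is f differentiable_on U)"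

definition smooth_surface :: "(real^3) set \<Rightarrow> bool" where
  "smooth_surface S \<longleftrightarrow> (\<forall>y\<in>S. \<exists>U F. open U \<and> y \<in> U \<and> smooth_on3 U F \<and>
      (\<exists>i. partial3 i F y \<noteq> 0) \<and> S \<inter> U = {x\<in>U. F x = 0})"

text \<open>Standing hypotheses on (S, nu): S is the smooth boundary of a compact convex
  set K with 0 in its interior, symmetric, flat near the poles; nu is the outward
  unit normal (unit vector whose supporting half-space contains K).\<close>
definition admissible_S :: "real \<Rightarrow> (real^3) set \<Rightarrow> (real^3 \<Rightarrow> real^3) \<Rightarrow> bool" where
  "admissible_S \<delta>0 S \<nu> \<longleftrightarrow>
     (\<exists>K. compact K \<and> convex K \<and> 0 \<in> interior K \<and> S = frontier K \<and>
          (\<forall>y\<in>S. norm (\<nu> y) = 1 \<and> (\<forall>k\<in>K. \<nu> y \<bullet> (k - y) \<le> 0))) \<and>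
     smooth_surface S \<and>
     (\<forall>y. y \<in> S \<longleftrightarrow> refl3 y \<in> S) \<and>
     (\<forall>\<theta> y. y \<in> S \<longrightarrow> rot3 \<theta> y \<in> S) \<and>
     S \<inter> {y. (y$1)^2 + (y$2)^2 \<le> 9 * \<delta>0^2} =
       {y. (y$1)^2 + (y$2)^2 \<le> 9 * \<delta>0^2 \<and> (y$3 = 1 \<or> y$3 = -1)}"

definition Edisk :: "real \<Rightarrow> real \<Rightarrow> (real^3) set" where
  "Edisk \<delta>0 k = {y. (y$1)^2 + (y$2)^2 \<le> k^2 * \<delta>0^2 \<and> (y$3 = 1 \<or> y$3 = -1)}"

type_synonym jet = "(real^3) \<times> (real^3) \<times> real"

definition J1 :: "(real^3) set \<Rightarrow> (real^3 \<Rightarrow> real^3) \<Rightarrow> jet set" where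
  "J1 S \<nu> = {(q, p, z). q \<in> S \<and> p \<bullet> \<nu> q = 0}"

text \<open>The identification S^*R^3 = R^3 x S -> J^1(S).\<close>
definition Phi :: "(real^3 \<Rightarrow> real^3) \<Rightarrow> (real^3) \<times> (real^3) \<Rightarrow> jet" where
  "Phi \<nu> xy = (case xy of (x, y) \<Rightarrow> (y, x - (x \<bullet> \<nu> y) *\<^sub>R \<nu> y, x \<bullet> y))"

text \<open>H_+ for sigma = 1, H_- for sigma = -1.\<close>
definition Hset :: "(real^3) set \<Rightarrow> (real^3 \<Rightarrow> real^3) \<Rightarrow> real \<Rightarrow> jet set" where
  "Hset S \<nu> \<sigma> = Phi \<nu> ` {(x, y). y \<in> S \<and>
      (\<exists>t. \<sigma> * t > 0 \<and> y = t *\<^sub>R vector [- x$2, x$1, 1])}"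

definition TEz :: "(real^3) set \<Rightarrow> (real^3 \<Rightarrow> real^3) \<Rightarrow> real \<Rightarrow> real \<Rightarrow> jet set" where
  "TEz S \<nu> \<delta>0 k = {w \<in> J1 S \<nu>. fst w \<in> Edisk \<delta>0 k}"

definition proj :: "jet \<Rightarrow> (real^3) \<times> (real^3)" where
  "proj w = (fst w, fst (snd w))"

definition tangent_vecs :: "'a::real_normed_vector set \<Rightarrow> 'a \<Rightarrow> 'a set" where
  "tangent_vecs A a = {v. \<exists>\<gamma>. (\<forall>t. \<gamma> t \<in> A) \<and> \<gamma> 0 = a \<and> (\<gamma> has_vector_derivative v) (at 0)}"

definition transversal_in :: "'a::real_normed_vector set \<Rightarrow> 'a set \<Rightarrow> 'a set \<Rightarrow> bool" where
  "transversal_in M A B \<longleftrightarrow> (\<forall>a \<in> A \<inter> B.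
     {u + v | u v. u \<in> tangent_vecs A a \<and> v \<in> tangent_vecs B a} = tangent_vecs M a)"

definition alpha :: "jet \<Rightarrow> jet \<Rightarrow> real" where
  "alpha w X = snd (snd X) - fst (snd w) \<bullet> fst X"

definition dalpha :: "jet \<Rightarrow> jet \<Rightarrow> real" where
  "dalpha X Y = fst X \<bullet> fst (snd Y) - fst Y \<bullet> fst (snd X)"

definition is_reeb :: "jet set \<Rightarrow> jet \<Rightarrow> jet \<Rightarrow> bool" where
  "is_reeb M w R \<longleftrightarrow> R \<in> tangent_vecs M w \<and> alpha w R = 1 \<and>
      (\<forall>Y \<in> tangent_vecs M w. dalpha R Y = 0)"

definition reeb_invariant :: "jet set \<Rightarrow> jet set \<Rightarrow> bool" where
  "reeb_invariant M A \<longleftrightarrow> (\<forall>\<gamma>. (\<forall>s. \<gamma> s \<in> M \<and>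
        (\<exists>R. (\<gamma> has_vector_derivative R) (at s) \<and> is_reeb M (\<gamma> s) R)) \<and> \<gamma> 0 \<in> A
      \<longrightarrow> (\<forall>s. \<gamma> s \<in> A))"

definition cx_chart :: "(real^3) \<times> (real^3) \<Rightarrow> complex \<times> complex" where
  "cx_chart qp = (Complex (fst qp $ 1) (snd qp $ 1), Complex (fst qp $ 2) (snd qp $ 2))"

definition smooth_cx_subvariety :: "(complex \<times> complex) set \<Rightarrow> (complex \<times> complex) set \<Rightarrow> bool" where
  "smooth_cx_subvariety D X \<longleftrightarrow> X \<subseteq> D \<and> closedin (top_of_set D) X \<and>
     (\<forall>a\<in>X. \<exists>U F F'. open U \<and> a \<in> U \<and>
        (\<forall>w\<in>U. (F has_derivative F' w) (at w) \<and>
           (\<forall>c v1 v2. F' w (c * v1, c * v2) = c * F' w (v1, v2))) \<and>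
        F' a \<noteq> (\<lambda>_. 0) \<and>
        X \<inter> U = {w \<in> D \<inter> U. F w = 0})"

text \<open>T^*E is a disjoint union of two sheets (q3 = 1 and q3 = -1), each
  identified with a domain in C^2.\<close>
definition cx_subvariety_TE :: "((real^3) \<times> (real^3)) set \<Rightarrow> ((real^3) \<times> (real^3)) set \<Rightarrow> bool" where
  "cx_subvariety_TE T X \<longleftrightarrow> X \<subseteq> T \<and> (\<forall>\<tau>\<in>{1, -1::real}.
      smooth_cx_subvariety (cx_chart ` {qp \<in> T. fst qp $ 3 = \<tau>})
                            (cx_chart ` {qp \<in> X. fst qp $ 3 = \<tau>}))"

end

theory Submission
  imports Defs
begin

text \<open>Over the disc of radius \<open>3\<delta>\<^sub>0\<close> the surface \<open>S\<close> consists of two flat discs with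
  vertical normal \<open>\<nu> = (0,0,\<plusminus>1)\<close>. There \<open>J\<^sup>1(S)\<close> is cut out by \<open>q\<^sub>3 = \<plusminus>1, p\<^sub>3 = 0\<close>,
  and \<open>H\<^sub>\<sigma>\<close> is the graph \<open>q\<^sub>3 = \<sigma>, p = \<sigma>(q\<^sub>2, -q\<^sub>1, 0)\<close>, with \<open>z\<close> free. Everything is
  then explicit: the boundary \<open>|q| = 2\<delta>\<^sub>0\<close> contains all \<open>(p, z)\<close>-directions, so together with
  the graph it spans the tangent space; the Reeb field is \<open>\<partial>\<^sub>z\<close>, which moves neither \<open>q\<close> nor
  \<open>p\<close>; and in the chart \<open>q + i p\<close> the graph is the complex line \<open>\<zeta>\<^sub>2 + i\<sigma> \<zeta>\<^sub>1 = 0\<close>.\<close>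

lemma vec3_eq_iff: "(u::real^3) = v \<longleftrightarrow> u$1 = v$1 \<and> u$2 = v$2 \<and> u$3 = v$3"
  by (simp add: vec_eq_iff forall_3)

lemma inner_vec3: "(u::real^3) \<bullet> v = u$1 * v$1 + u$2 * v$2 + u$3 * v$3"
  by (simp add: inner_vec_def sum_3)

definition horiz_sq :: "real^3 \<Rightarrow> real" where
  "horiz_sq y = (y$1)^2 + (y$2)^2"

text \<open>The region in which \<open>admissible_S\<close> makes \<open>S\<close> flat.\<close>
definition polar_cylinder :: "real \<Rightarrow> (real^3) set" where
  "polar_cylinder \<delta> = {y. horiz_sq y < 9 * \<delta>^2}"

lemma open_polar_cylinder: "open (polar_cylinder \<delta>)"
  unfolding polar_cylinder_def horiz_sq_def by (intro open_Collect_less continuous_intros)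

lemma polar_cylinder_if_horiz_sq_le:
  assumes "\<delta> > 0" "horiz_sq y \<le> 4 * \<delta>^2"
  shows "y \<in> polar_cylinder \<delta>"
proof -
  have "0 < \<delta>^2" using assms(1) by simp
  thus ?thesis using assms(2) unfolding polar_cylinder_def mem_Collect_eq by linarith
qed

lemma horiz_sq_add_scaled_horizontal:
  "horiz_sq (y + s *\<^sub>R vector [y$1, y$2, 0]) = (1 + s)^2 * horiz_sq y"
  unfolding horiz_sq_def by (simp add: algebra_simps power2_eq_square)

lemma mem_S_polar_iff:
  assumes "admissible_S \<delta> S \<nu>" "y \<in> polar_cylinder \<delta>"
  shows "y \<in> S \<longleftrightarrow> y$3 = 1 \<or> y$3 = -1"
proof -
  have "y \<in> S \<longleftrightarrow> y \<in> S \<inter> {y. (y$1)^2 + (y$2)^2 \<le> 9 * \<delta>^2}"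
    using assms(2) by (auto simp: polar_cylinder_def horiz_sq_def)
  thus ?thesis
    using assms unfolding admissible_S_def polar_cylinder_def horiz_sq_def by auto
qed

lemma inner_eq_0_if_one_sided:
  fixes n v :: "'a::real_inner"
  assumes e: "e > 0" and le: "\<And>s. \<bar>s\<bar> < e \<Longrightarrow> n \<bullet> (s *\<^sub>R v) \<le> 0"
  shows "n \<bullet> v = 0"
proof -
  have "e/2 * (n \<bullet> v) \<le> 0" using le[of "e/2"] e by simp
  moreover have "- (e/2) * (n \<bullet> v) \<le> 0" using le[of "- (e/2)"] e by simp
  ultimately have "e/2 * (n \<bullet> v) = 0" by linarith
  thus ?thesis using e by simp
qed

lemma admissible_S_convex_body:
  assumes "admissible_S \<delta> S \<nu>"
  obtains K where "compact K" "S = frontier K" "0 \<in> interior K"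
    "\<And>y. y \<in> S \<Longrightarrow> norm (\<nu> y) = 1"
    "\<And>y k. y \<in> S \<Longrightarrow> k \<in> K \<Longrightarrow> \<nu> y \<bullet> (k - y) \<le> 0"
proof -
  obtain K where "compact K" "S = frontier K" "0 \<in> interior K"
    "\<forall>y\<in>S. norm (\<nu> y) = 1 \<and> (\<forall>k\<in>K. \<nu> y \<bullet> (k - y) \<le> 0)"
    using assms unfolding admissible_S_def by blast
  then show ?thesis using that by blast
qed

text \<open>The flat discs force the outward normal: horizontal translates of \<open>y\<close> stay in \<open>S\<close>,
  so \<open>\<nu> y\<close> is vertical, and \<open>0 \<in> K\<close> fixes its sign.\<close>
lemma admissible_normal_polar:
  assumes adm: "admissible_S \<delta> S \<nu>" and yS: "y \<in> S" and y: "y \<in> polar_cylinder \<delta>"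
  shows "\<nu> y = vector [0, 0, y$3]"
proof -
  obtain K where K: "compact K" "S = frontier K" "0 \<in> interior K"
    and supp: "norm (\<nu> y) = 1" "\<And>k. k \<in> K \<Longrightarrow> \<nu> y \<bullet> (k - y) \<le> 0"
    using admissible_S_convex_body[OF adm] yS by metis
  have SK: "S \<subseteq> K" using K(1,2) compact_imp_closed frontier_subset_closed by blast
  have y3: "y$3 = 1 \<or> y$3 = -1" using mem_S_polar_iff[OF adm y] yS by simp
  obtain e where e: "e > 0" "ball y e \<subseteq> polar_cylinder \<delta>"
    using open_polar_cylinder y open_contains_ball by blast
  have horizontal: "\<nu> y $ i = 0" if i: "i = 1 \<or> i = 2" for i
  proof -
    have "\<nu> y \<bullet> axis i 1 = 0"
    proof (rule inner_eq_0_if_one_sided[OF e(1)])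
      fix s :: real assume s: "\<bar>s\<bar> < e"
      have "y + s *\<^sub>R axis i 1 \<in> ball y e" using s by (simp add: dist_norm norm_axis_1)
      hence "y + s *\<^sub>R axis i 1 \<in> polar_cylinder \<delta>" using e(2) by blast
      moreover have "(y + s *\<^sub>R axis i 1) $ 3 = y $ 3" using i by (auto simp: axis_def)
      ultimately have "y + s *\<^sub>R axis i 1 \<in> S" using mem_S_polar_iff[OF adm] y3 by auto
      thus "\<nu> y \<bullet> (s *\<^sub>R axis i 1) \<le> 0" using supp(2) SK by fastforce
    qed
    thus ?thesis by (simp add: inner_axis)
  qed
  have "(\<nu> y $ 3)^2 = 1"
    using supp(1) horizontal by (simp add: norm_eq_1 inner_vec3 power2_eq_square)
  moreover have "\<nu> y $ 3 * y $ 3 \<ge> 0"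
    using supp(2)[of 0] K(3) interior_subset horizontal by (fastforce simp: inner_vec3)
  ultimately have "\<nu> y $ 3 = y $ 3" using y3 by (auto simp: power2_eq_1_iff)
  thus ?thesis using horizontal by (simp add: vec3_eq_iff)
qed

lemma J1_polar_iff:
  assumes adm: "admissible_S \<delta> S \<nu>" and q: "q \<in> polar_cylinder \<delta>"
  shows "(q, p, z) \<in> J1 S \<nu> \<longleftrightarrow> (q$3 = 1 \<or> q$3 = -1) \<and> p$3 = 0"
proof (cases "q \<in> S")
  case True
  then show ?thesis
    using mem_S_polar_iff[OF adm q] admissible_normal_polar[OF adm True q]
    by (auto simp: J1_def inner_vec3)
qed (use mem_S_polar_iff[OF adm q] J1_def in auto)

lemma Hset_polar_iff:
  assumes adm: "admissible_S \<delta> S \<nu>" and \<sigma>: "\<sigma> = 1 \<or> \<sigma> = -1" and q: "q \<in> polar_cylinder \<delta>"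
  shows "(q, p, z) \<in> Hset S \<nu> \<sigma> \<longleftrightarrow> q$3 = \<sigma> \<and> p = vector [\<sigma> * q$2, - \<sigma> * q$1, 0]"
proof
  assume "(q, p, z) \<in> Hset S \<nu> \<sigma>"
  then obtain x t where qS: "q \<in> S" and t: "\<sigma> * t > 0" and qx: "q = t *\<^sub>R vector [- x$2, x$1, 1]"
    and p: "p = x - (x \<bullet> \<nu> q) *\<^sub>R \<nu> q"
    unfolding Hset_def Phi_def by auto
  have "t = \<sigma>"
    using mem_S_polar_iff[OF adm q] qS qx t \<sigma> by (auto simp: zero_less_mult_iff)
  then show "q$3 = \<sigma> \<and> p = vector [\<sigma> * q$2, - \<sigma> * q$1, 0]"
    using qx \<sigma> unfolding p admissible_normal_polar[OF adm qS q]
    by (auto simp: vec3_eq_iff inner_vec3)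
next
  assume h: "q$3 = \<sigma> \<and> p = vector [\<sigma> * q$2, - \<sigma> * q$1, 0]"
  have qS: "q \<in> S" using mem_S_polar_iff[OF adm q] h \<sigma> by auto
  define x where "x = (vector [\<sigma> * q$2, - \<sigma> * q$1, \<sigma> * z] :: real^3)"
  have "Phi \<nu> (x, q) = (q, p, z)" "q = \<sigma> *\<^sub>R vector [- x$2, x$1, 1]" "\<sigma> * \<sigma> > 0"
    using h \<sigma> admissible_normal_polar[OF adm qS q]
    by (auto simp: Phi_def x_def vec3_eq_iff inner_vec3)
  then show "(q, p, z) \<in> Hset S \<nu> \<sigma>"
    unfolding Hset_def using qS by (auto intro!: image_eqI[where x="(x, q)"])
qed

lemma Hset_subset_J1:
  assumes "admissible_S \<delta> S \<nu>"
  shows "Hset S \<nu> \<sigma> \<subseteq> J1 S \<nu>"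
proof
  fix w assume "w \<in> Hset S \<nu> \<sigma>"
  then obtain x y where y: "y \<in> S" and w: "w = Phi \<nu> (x, y)" unfolding Hset_def by auto
  have "\<nu> y \<bullet> \<nu> y = 1" using admissible_S_convex_body[OF assms] y by (metis norm_eq_1)
  then have "(x - (x \<bullet> \<nu> y) *\<^sub>R \<nu> y) \<bullet> \<nu> y = 0" by (simp add: inner_diff_left)
  thus "w \<in> J1 S \<nu>" using y w unfolding J1_def Phi_def by simp
qed

text \<open>Since \<open>tangent_vecs\<close> asks for a curve defined on all of \<open>\<real>\<close>, the segment
  through \<open>w\<close> is reparametrised as \<open>t \<mapsto> w + r sin (t/r) v\<close>, which never leaves a small ball.\<close>
lemma line_direction_in_tangent_vecs:
  fixes w v :: "'a::real_normed_vector"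
  assumes "open U" "w \<in> U" and line: "\<And>s. w + s *\<^sub>R v \<in> U \<Longrightarrow> w + s *\<^sub>R v \<in> A"
  shows "v \<in> tangent_vecs A w"
proof -
  obtain e where e: "e > 0" "ball w e \<subseteq> U" using assms(1,2) open_contains_ball by blast
  define r where "r = e / (norm v + 1)"
  have r: "r > 0" "r * norm v < e"
    using e(1) by (auto simp: r_def field_simps add_pos_nonneg)
  define \<gamma> where "\<gamma> t = w + (r * sin (t / r)) *\<^sub>R v" for t
  have "\<gamma> t \<in> A" for t
  proof -
    have "\<bar>r * sin (t / r)\<bar> * norm v \<le> r * norm v"
      using r(1) by (intro mult_right_mono) (auto simp: abs_mult)
    hence "\<gamma> t \<in> ball w e" using r(2) by (simp add: \<gamma>_def dist_norm)
    thus ?thesis using e(2) line unfolding \<gamma>_def by blast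
  qed
  moreover have "(\<gamma> has_vector_derivative v) (at 0)"
  proof -
    have "((\<lambda>t. r * sin (t / r)) has_real_derivative 1) (at 0)"
      using r(1) by (auto intro!: derivative_eq_intros)
    from has_vector_derivative_scaleR[OF this has_vector_derivative_const[of v]]
    have "((\<lambda>t. (r * sin (t / r)) *\<^sub>R v) has_vector_derivative v) (at 0)" by simp
    then show ?thesis
      unfolding \<gamma>_def by (subst add.commute) (simp only: has_vector_derivative_add_const)
  qed
  moreover have "\<gamma> 0 = w" by (simp add: \<gamma>_def)
  ultimately show ?thesis unfolding tangent_vecs_def by blast
qed

lemma tangent_vecs_annihilated_by_locally_constant:
  fixes w v :: "'a::real_normed_vector" and l :: "'a \<Rightarrow> real"
  assumes v: "v \<in> tangent_vecs A w" and U: "open U" "w \<in> U" and l: "bounded_linear l"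
    and const: "\<And>u. u \<in> A \<Longrightarrow> u \<in> U \<Longrightarrow> l u = l w"
  shows "l v = 0"
proof -
  obtain \<gamma> where \<gamma>: "\<And>t. \<gamma> t \<in> A" "\<gamma> 0 = w" "(\<gamma> has_vector_derivative v) (at 0)"
    using v unfolding tangent_vecs_def by blast
  have "(\<gamma> \<longlongrightarrow> w) (at 0)"
    using has_vector_derivative_continuous[OF \<gamma>(3)] \<gamma>(2) by (simp add: isCont_def)
  hence "eventually (\<lambda>t. \<gamma> t \<in> U) (at 0)" using topological_tendstoD U by fast
  hence ev: "eventually (\<lambda>t. l (\<gamma> t) = l w) (at 0)"
    by eventually_elim (use \<gamma>(1) const in auto)
  have "((\<lambda>t. l (\<gamma> t)) has_derivative (\<lambda>h. l (h *\<^sub>R v))) (at 0)"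
    using bounded_linear.has_derivative[OF l \<gamma>(3)[unfolded has_vector_derivative_def]] .
  hence "((\<lambda>t. l w) has_derivative (\<lambda>h. l (h *\<^sub>R v))) (at 0)"
    using has_derivative_transform_eventually[OF _ ev] \<gamma>(2) by simp
  moreover have "((\<lambda>t. l w) has_derivative (\<lambda>h. 0)) (at 0)" by simp
  ultimately have "(\<lambda>h. l (h *\<^sub>R v)) = (\<lambda>h. 0)" by (rule has_derivative_unique)
  thus ?thesis by (metis scaleR_one)
qed

lemma tangent_vecs_mono:
  assumes "A \<subseteq> B"
  shows "tangent_vecs A w \<subseteq> tangent_vecs B w"
proof
  fix v assume "v \<in> tangent_vecs A w"
  then obtain \<gamma> where "\<And>t. \<gamma> t \<in> A" "\<gamma> 0 = w" "(\<gamma> has_vector_derivative v) (at 0)"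
    unfolding tangent_vecs_def by blast
  then show "v \<in> tangent_vecs B w"
    unfolding tangent_vecs_def using assms by (intro CollectI exI[of _ \<gamma>]) auto
qed

lemma bounded_linear_jet_components:
  "bounded_linear (\<lambda>u::jet. fst u $ i)" "bounded_linear (\<lambda>u::jet. fst (snd u) $ i)"
  by (auto intro!: bounded_linear_compose[OF bounded_linear_vec_nth] bounded_linear_fst
      bounded_linear_compose[OF bounded_linear_fst] bounded_linear_snd)

lemma tangent_vecs_J1_polar:
  assumes adm: "admissible_S \<delta> S \<nu>" and w: "w \<in> J1 S \<nu>" "fst w \<in> polar_cylinder \<delta>"
  shows "tangent_vecs (J1 S \<nu>) w = {v. fst v $ 3 = 0 \<and> fst (snd v) $ 3 = 0}"
proof
  obtain q p z where qpz: "w = (q, p, z)" by (cases w) auto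
  have q: "q \<in> polar_cylinder \<delta>" using w(2) qpz by simp
  have sheet: "q$3 = 1 \<or> q$3 = -1" "p$3 = 0" using J1_polar_iff[OF adm q] w(1) qpz by auto
  have opn: "open (fst -` polar_cylinder \<delta> :: jet set)"
    by (simp add: open_vimage_fst open_polar_cylinder)
  show "{v. fst v $ 3 = 0 \<and> fst (snd v) $ 3 = 0} \<subseteq> tangent_vecs (J1 S \<nu>) w"
  proof
    fix v :: jet assume v: "v \<in> {v. fst v $ 3 = 0 \<and> fst (snd v) $ 3 = 0}"
    show "v \<in> tangent_vecs (J1 S \<nu>) w"
    proof (rule line_direction_in_tangent_vecs[OF opn])
      show "w \<in> fst -` polar_cylinder \<delta>" using w(2) by simp
      fix s assume "w + s *\<^sub>R v \<in> fst -` polar_cylinder \<delta>"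
      then show "w + s *\<^sub>R v \<in> J1 S \<nu>"
        using J1_polar_iff[OF adm, of "q + s *\<^sub>R fst v"] sheet v qpz
        by (cases v) auto
    qed
  qed
  show "tangent_vecs (J1 S \<nu>) w \<subseteq> {v. fst v $ 3 = 0 \<and> fst (snd v) $ 3 = 0}"
  proof
    fix v assume v: "v \<in> tangent_vecs (J1 S \<nu>) w"
    define U where "U = fst -` polar_cylinder \<delta> \<inter> {u::jet. \<bar>fst u $ 3 - q $ 3\<bar> < 1}"
    have U: "open U" "w \<in> U"
      using opn w(2) qpz unfolding U_def by (auto intro!: open_Int open_Collect_less continuous_intros)
    have local_sheet: "fst u $ 3 = fst w $ 3 \<and> fst (snd u) $ 3 = fst (snd w) $ 3"
      if "u \<in> J1 S \<nu>" "u \<in> U" for u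
      using that J1_polar_iff[OF adm, of "fst u" "fst (snd u)" "snd (snd u)"] sheet qpz
      unfolding U_def by auto
    have "fst v $ 3 = 0"
      using tangent_vecs_annihilated_by_locally_constant[OF v U bounded_linear_jet_components(1)]
        local_sheet by blast
    moreover have "fst (snd v) $ 3 = 0"
      using tangent_vecs_annihilated_by_locally_constant[OF v U bounded_linear_jet_components(2)]
        local_sheet by blast
    ultimately show "v \<in> {v. fst v $ 3 = 0 \<and> fst (snd v) $ 3 = 0}" by simp
  qed
qed

lemma tangent_vecs_Hset_polar:
  assumes adm: "admissible_S \<delta> S \<nu>" and \<sigma>: "\<sigma> = 1 \<or> \<sigma> = -1"
    and w: "w \<in> Hset S \<nu> \<sigma>" "fst w \<in> polar_cylinder \<delta>"
    and a: "a $ 3 = 0"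
  shows "(a, vector [\<sigma> * a$2, - \<sigma> * a$1, 0], c) \<in> tangent_vecs (Hset S \<nu> \<sigma>) w"
proof (rule line_direction_in_tangent_vecs[of "fst -` polar_cylinder \<delta>"])
  obtain q p z where qpz: "w = (q, p, z)" by (cases w) auto
  have q: "q \<in> polar_cylinder \<delta>" using w(2) qpz by simp
  have H: "q$3 = \<sigma>" "p = vector [\<sigma> * q$2, - \<sigma> * q$1, 0]"
    using Hset_polar_iff[OF adm \<sigma> q] w(1) qpz by auto
  show "open (fst -` polar_cylinder \<delta> :: jet set)"
    by (simp add: open_vimage_fst open_polar_cylinder)
  show "w \<in> fst -` polar_cylinder \<delta>" using w(2) by simp
  fix s assume "w + s *\<^sub>R (a, vector [\<sigma> * a$2, - \<sigma> * a$1, 0], c) \<in> fst -` polar_cylinder \<delta>"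
  then show "w + s *\<^sub>R (a, vector [\<sigma> * a$2, - \<sigma> * a$1, 0], c) \<in> Hset S \<nu> \<sigma>"
    using Hset_polar_iff[OF adm \<sigma>, of "q + s *\<^sub>R a"] H a qpz
    by (auto simp: vec3_eq_iff algebra_simps)
qed

lemma TEz_eq:
  assumes adm: "admissible_S \<delta> S \<nu>" and \<delta>: "\<delta> > 0"
  shows "TEz S \<nu> \<delta> 2 = {u \<in> J1 S \<nu>. horiz_sq (fst u) \<le> 4 * \<delta>^2}"
proof -
  have "fst u \<in> Edisk \<delta> 2 \<longleftrightarrow> horiz_sq (fst u) \<le> 4 * \<delta>^2" if u: "u \<in> J1 S \<nu>" for u
    using u J1_polar_iff[OF adm polar_cylinder_if_horiz_sq_le[OF \<delta>], of "fst u" "fst (snd u)" "snd (snd u)"]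
    by (auto simp: Edisk_def horiz_sq_def)
  thus ?thesis unfolding TEz_def by auto
qed

lemma interior_of_TEz:
  assumes adm: "admissible_S \<delta> S \<nu>" and \<delta>: "\<delta> > 0"
  shows "top_of_set (J1 S \<nu>) interior_of TEz S \<nu> \<delta> 2 = {u \<in> J1 S \<nu>. horiz_sq (fst u) < 4 * \<delta>^2}"
proof (intro set_eqI iffI)
  let ?M = "J1 S \<nu>"
  fix u assume "u \<in> {u \<in> ?M. horiz_sq (fst u) < 4 * \<delta>^2}"
  moreover have "openin (top_of_set ?M) (?M \<inter> {u. horiz_sq (fst u) < 4 * \<delta>^2})"
    unfolding horiz_sq_def by (intro openin_open_Int open_Collect_less continuous_intros)
  moreover have "?M \<inter> {u. horiz_sq (fst u) < 4 * \<delta>^2} \<subseteq> TEz S \<nu> \<delta> 2"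
    by (auto simp: TEz_eq[OF adm \<delta>])
  ultimately show "u \<in> top_of_set ?M interior_of TEz S \<nu> \<delta> 2"
    unfolding interior_of_def by auto
next
  let ?M = "J1 S \<nu>"
  fix u assume u: "u \<in> top_of_set ?M interior_of TEz S \<nu> \<delta> 2"
  then obtain W where W: "open W" "u \<in> W" "W \<inter> ?M \<subseteq> TEz S \<nu> \<delta> 2"
    unfolding interior_of_def openin_open by auto
  have uT: "u \<in> ?M" "horiz_sq (fst u) \<le> 4 * \<delta>^2"
    using u interior_of_subset[of "top_of_set ?M"] TEz_eq[OF adm \<delta>] by auto
  obtain q p z where qpz: "u = (q, p, z)" by (cases u) auto
  have q: "q \<in> polar_cylinder \<delta>"
    using polar_cylinder_if_horiz_sq_le[OF \<delta>] uT qpz by simp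
  define g where "g s = (q + s *\<^sub>R vector [q$1, q$2, 0], p, z)" for s :: real
  show "u \<in> {u \<in> ?M. horiz_sq (fst u) < 4 * \<delta>^2}"
  proof (rule ccontr)
    assume "u \<notin> {u \<in> ?M. horiz_sq (fst u) < 4 * \<delta>^2}"
    hence boundary: "horiz_sq q = 4 * \<delta>^2" using uT qpz by simp
    have "(g \<longlongrightarrow> u) (at_right 0)"
      unfolding g_def qpz by (auto intro!: tendsto_eq_intros)
    moreover have "open (W \<inter> fst -` polar_cylinder \<delta>)" "u \<in> W \<inter> fst -` polar_cylinder \<delta>"
      using W q qpz by (auto simp: open_Int open_vimage_fst open_polar_cylinder)
    ultimately have "eventually (\<lambda>s. g s \<in> W \<inter> fst -` polar_cylinder \<delta>) (at_right 0)"
      by (rule topological_tendstoD)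
    hence "eventually (\<lambda>s. s > 0 \<and> g s \<in> W \<inter> fst -` polar_cylinder \<delta>) (at_right 0)"
      using eventually_at_right_less by (rule eventually_conj[rotated])
    then obtain s where "s > 0" "g s \<in> W \<inter> fst -` polar_cylinder \<delta>"
      using eventually_happens' trivial_limit_at_right_real by blast
    hence s: "s > 0" "g s \<in> W" "q + s *\<^sub>R vector [q$1, q$2, 0] \<in> polar_cylinder \<delta>"
      by (auto simp: g_def)
    have "g s \<in> ?M"
      using J1_polar_iff[OF adm s(3)] J1_polar_iff[OF adm q] uT(1) qpz by (simp add: g_def)
    hence "horiz_sq (q + s *\<^sub>R vector [q$1, q$2, 0]) \<le> 4 * \<delta>^2"
      using W(3) s(2) TEz_eq[OF adm \<delta>] by (auto simp: g_def)
    moreover have "(1 + s)^2 * (4 * \<delta>^2) > 1 * (4 * \<delta>^2)"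
      using s(1) \<delta> by (intro mult_strict_right_mono one_less_power) auto
    ultimately show False
      using horiz_sq_add_scaled_horizontal boundary by simp
  qed
qed

lemma frontier_of_TEz:
  assumes adm: "admissible_S \<delta> S \<nu>" and \<delta>: "\<delta> > 0"
  shows "top_of_set (J1 S \<nu>) frontier_of TEz S \<nu> \<delta> 2 = {u \<in> J1 S \<nu>. horiz_sq (fst u) = 4 * \<delta>^2}"
proof -
  have "closedin (top_of_set (J1 S \<nu>)) (J1 S \<nu> \<inter> {u. horiz_sq (fst u) \<le> 4 * \<delta>^2})"
    unfolding horiz_sq_def by (intro closedin_closed_Int closed_Collect_le continuous_intros)
  hence "closedin (top_of_set (J1 S \<nu>)) (TEz S \<nu> \<delta> 2)"
    by (simp add: TEz_eq[OF adm \<delta>] Int_def)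
  hence "top_of_set (J1 S \<nu>) frontier_of TEz S \<nu> \<delta> 2
      = TEz S \<nu> \<delta> 2 - {u \<in> J1 S \<nu>. horiz_sq (fst u) < 4 * \<delta>^2}"
    unfolding frontier_of_def interior_of_TEz[OF adm \<delta>] by (simp add: closure_of_closedin)
  also have "\<dots> = {u \<in> J1 S \<nu>. horiz_sq (fst u) = 4 * \<delta>^2}"
    unfolding TEz_eq[OF adm \<delta>] by fastforce
  finally show ?thesis .
qed

lemma transversal_Hset_frontier_TEz:
  assumes adm: "admissible_S \<delta> S \<nu>" and \<delta>: "\<delta> > 0" and \<sigma>: "\<sigma> = 1 \<or> \<sigma> = -1"
  shows "transversal_in (J1 S \<nu>) (Hset S \<nu> \<sigma>) (top_of_set (J1 S \<nu>) frontier_of TEz S \<nu> \<delta> 2)"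
  unfolding transversal_in_def
proof
  let ?M = "J1 S \<nu>" and ?H = "Hset S \<nu> \<sigma>" and ?B = "top_of_set (J1 S \<nu>) frontier_of TEz S \<nu> \<delta> 2"
  fix w assume w: "w \<in> ?H \<inter> ?B"
  obtain q p z where qpz: "w = (q, p, z)" by (cases w) auto
  have B: "?B = {u \<in> ?M. horiz_sq (fst u) = 4 * \<delta>^2}" by (rule frontier_of_TEz[OF adm \<delta>])
  have wM: "w \<in> ?M" and q: "horiz_sq q = 4 * \<delta>^2" using w B qpz by auto
  have qcyl: "q \<in> polar_cylinder \<delta>" using polar_cylinder_if_horiz_sq_le[OF \<delta>] q by simp
  have TM: "tangent_vecs ?M w = {v. fst v $ 3 = 0 \<and> fst (snd v) $ 3 = 0}"
    using tangent_vecs_J1_polar[OF adm wM] qcyl qpz by simp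
  have fibre: "(0, b, c) \<in> tangent_vecs ?B w" if b: "b $ 3 = 0" for b c
  proof (rule line_direction_in_tangent_vecs[of UNIV])
    fix s :: real
    have "(q, p + s *\<^sub>R b, z + s * c) \<in> ?M"
      using J1_polar_iff[OF adm qcyl] wM qpz b by simp
    thus "w + s *\<^sub>R (0, b, c) \<in> ?B" using B q qpz by simp
  qed auto
  show "{u + v |u v. u \<in> tangent_vecs ?H w \<and> v \<in> tangent_vecs ?B w} = tangent_vecs ?M w"
  proof (intro set_eqI iffI)
    fix x assume "x \<in> {u + v |u v. u \<in> tangent_vecs ?H w \<and> v \<in> tangent_vecs ?B w}"
    then obtain u v where "x = u + v" "u \<in> tangent_vecs ?M w" "v \<in> tangent_vecs ?M w"
      using tangent_vecs_mono[OF Hset_subset_J1[OF adm]] tangent_vecs_mono[of ?B ?M] B by blast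
    thus "x \<in> tangent_vecs ?M w" unfolding TM by simp
  next
    fix x assume "x \<in> tangent_vecs ?M w"
    then obtain a b c where x: "x = (a, b, c)" "a $ 3 = 0" "b $ 3 = 0"
      unfolding TM by (cases x) auto
    define b' where "b' = (vector [\<sigma> * a$2, - \<sigma> * a$1, 0] :: real^3)"
    have "(a, b', 0) \<in> tangent_vecs ?H w"
      unfolding b'_def using tangent_vecs_Hset_polar[OF adm \<sigma>] w qcyl qpz x(2) by simp
    moreover have "(0, b - b', c) \<in> tangent_vecs ?B w" using fibre x(3) by (simp add: b'_def)
    moreover have "x = (a, b', 0) + (0, b - b', c)" using x(1) by simp
    ultimately show "x \<in> {u + v |u v. u \<in> tangent_vecs ?H w \<and> v \<in> tangent_vecs ?B w}" by blast
  qed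
qed

text \<open>Over the flat discs \<open>d\<alpha>\<close> pairs the \<open>q\<close>- and \<open>p\<close>-directions of \<open>T(J\<^sup>1S)\<close>
  nondegenerately, so a Reeb vector has no \<open>q\<close>- or \<open>p\<close>-component: it is \<open>\<partial>\<^sub>z\<close>.\<close>
lemma reeb_vector_polar:
  assumes adm: "admissible_S \<delta> S \<nu>" and w: "w \<in> J1 S \<nu>" "fst w \<in> polar_cylinder \<delta>"
    and R: "is_reeb (J1 S \<nu>) w R"
  shows "fst R = 0 \<and> fst (snd R) = 0"
proof -
  have TM: "tangent_vecs (J1 S \<nu>) w = {v. fst v $ 3 = 0 \<and> fst (snd v) $ 3 = 0}"
    using tangent_vecs_J1_polar[OF adm w] .
  have R3: "fst R $ 3 = 0" "fst (snd R) $ 3 = 0" using R TM unfolding is_reeb_def by auto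
  have "dalpha R Y = 0" if "fst Y $ 3 = 0" "fst (snd Y) $ 3 = 0" for Y
    using R that unfolding is_reeb_def TM by blast
  hence "dalpha R (0, axis i 1, 0) = 0" "dalpha R (axis i 1, 0, 0) = 0" if "i = 1 \<or> i = 2" for i
    using that by (auto simp: axis_def)
  hence "fst R $ i = 0 \<and> fst (snd R) $ i = 0" if "i = 1 \<or> i = 2" for i
    using that by (auto simp: dalpha_def inner_axis inner_axis')
  thus ?thesis using R3 by (simp add: vec3_eq_iff)
qed

lemma constant_if_stationary_in_open_region:
  fixes f :: "real \<Rightarrow> 'a::real_normed_vector"
  assumes f: "continuous_on UNIV f" and G: "open G" "f 0 \<in> G"
    and stationary: "\<And>t. f t \<in> G \<Longrightarrow> (f has_derivative (\<lambda>_. 0)) (at t)"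
  shows "f t = f 0"
proof -
  define C where "C = {t. f t = f 0}"
  have "closed C" unfolding C_def using f by (intro closed_Collect_eq continuous_intros)
  moreover have "open C" unfolding open_contains_ball
  proof
    fix t assume t: "t \<in> C"
    have "t \<in> f -` G" using t G(2) unfolding C_def by simp
    then obtain e where e: "e > 0" "ball t e \<subseteq> f -` G"
      using open_vimage[OF G(1) f] open_contains_ball by blast
    have "(f has_derivative (\<lambda>_. 0)) (at x within ball t e)" if "x \<in> ball t e" for x
      using that e(2) by (intro has_derivative_at_withinI[OF stationary]) blast
    hence "\<exists>c. \<forall>x\<in>ball t e. f x = c" by (intro has_derivative_zero_constant) auto
    hence "ball t e \<subseteq> C" using t e(1) unfolding C_def by force
    thus "\<exists>e>0. ball t e \<subseteq> C" using e(1) by blast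
  qed
  moreover have "0 \<in> C" unfolding C_def by simp
  ultimately have "C = UNIV" using clopen by blast
  thus ?thesis unfolding C_def by blast
qed

lemma reeb_invariant_Hset_TEz:
  assumes adm: "admissible_S \<delta> S \<nu>" and \<delta>: "\<delta> > 0" and \<sigma>: "\<sigma> = 1 \<or> \<sigma> = -1"
  shows "reeb_invariant (J1 S \<nu>) (Hset S \<nu> \<sigma> \<inter> TEz S \<nu> \<delta> 2)"
  unfolding reeb_invariant_def
proof (intro allI impI)
  fix \<gamma> :: "real \<Rightarrow> jet" and s :: real
  assume "(\<forall>s. \<gamma> s \<in> J1 S \<nu> \<and> (\<exists>R. (\<gamma> has_vector_derivative R) (at s) \<and> is_reeb (J1 S \<nu>) (\<gamma> s) R))
           \<and> \<gamma> 0 \<in> Hset S \<nu> \<sigma> \<inter> TEz S \<nu> \<delta> 2"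
  hence M: "\<And>t. \<gamma> t \<in> J1 S \<nu>"
    and D: "\<And>t. \<exists>R. (\<gamma> has_vector_derivative R) (at t) \<and> is_reeb (J1 S \<nu>) (\<gamma> t) R"
    and start: "\<gamma> 0 \<in> Hset S \<nu> \<sigma>" "\<gamma> 0 \<in> TEz S \<nu> \<delta> 2" by blast+
  have horiz0: "horiz_sq (fst (\<gamma> 0)) \<le> 4 * \<delta>^2" using start(2) TEz_eq[OF adm \<delta>] by auto
  let ?G = "polar_cylinder \<delta> \<times> (UNIV :: (real^3) set)"
  have "proj (\<gamma> s) = proj (\<gamma> 0)"
  proof (rule constant_if_stationary_in_open_region[where G = ?G])
    have "isCont \<gamma> t" for t using D has_vector_derivative_continuous by blast
    thus "continuous_on UNIV (\<lambda>t. proj (\<gamma> t))"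
      unfolding proj_def by (intro continuous_intros continuous_at_imp_continuous_on) auto
    show "open ?G" by (simp add: open_polar_cylinder open_Times)
    show "proj (\<gamma> 0) \<in> ?G" using polar_cylinder_if_horiz_sq_le[OF \<delta> horiz0] by (simp add: proj_def)
    fix t assume "proj (\<gamma> t) \<in> ?G"
    hence "fst (\<gamma> t) \<in> polar_cylinder \<delta>" by (simp add: proj_def)
    then obtain R where "(\<gamma> has_derivative (\<lambda>h. h *\<^sub>R R)) (at t)" "fst R = 0" "fst (snd R) = 0"
      using D reeb_vector_polar[OF adm M] unfolding has_vector_derivative_def by metis
    thus "((\<lambda>t. proj (\<gamma> t)) has_derivative (\<lambda>_. 0)) (at t)"
      unfolding proj_def by (auto intro!: derivative_eq_intros simp: zero_prod_def)
  qed
  then obtain z where s: "\<gamma> s = (fst (\<gamma> 0), fst (snd (\<gamma> 0)), z)"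
    unfolding proj_def by (metis prod.collapse prod.inject)
  have cyl0: "fst (\<gamma> 0) \<in> polar_cylinder \<delta>" using polar_cylinder_if_horiz_sq_le[OF \<delta> horiz0] .
  have "\<gamma> s \<in> Hset S \<nu> \<sigma>"
    using start(1) Hset_polar_iff[OF adm \<sigma> cyl0] s by (metis prod.collapse)
  moreover have "\<gamma> s \<in> TEz S \<nu> \<delta> 2"
    unfolding TEz_eq[OF adm \<delta>] using M[of s] horiz0 s by simp
  ultimately show "\<gamma> s \<in> Hset S \<nu> \<sigma> \<inter> TEz S \<nu> \<delta> 2" by blast
qed

lemma proj_image_eq: "proj ` A = {(q, p). \<exists>z. (q, p, z) \<in> A}"
  by (force simp: proj_def)

lemma proj_TEz_eq:
  assumes adm: "admissible_S \<delta> S \<nu>" and \<delta>: "\<delta> > 0"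
  shows "proj ` TEz S \<nu> \<delta> 2 =
    {(q, p). horiz_sq q \<le> 4 * \<delta>^2 \<and> (q$3 = 1 \<or> q$3 = -1) \<and> p$3 = 0}"
  unfolding proj_image_eq TEz_eq[OF adm \<delta>]
  using J1_polar_iff[OF adm polar_cylinder_if_horiz_sq_le[OF \<delta>]] by auto

lemma proj_Hset_TEz_eq:
  assumes adm: "admissible_S \<delta> S \<nu>" and \<delta>: "\<delta> > 0" and \<sigma>: "\<sigma> = 1 \<or> \<sigma> = -1"
  shows "proj ` (Hset S \<nu> \<sigma> \<inter> TEz S \<nu> \<delta> 2) =
    {(q, p). horiz_sq q \<le> 4 * \<delta>^2 \<and> q$3 = \<sigma> \<and> p = vector [\<sigma> * q$2, - \<sigma> * q$1, 0]}"
  unfolding proj_image_eq TEz_eq[OF adm \<delta>]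
  using Hset_polar_iff[OF adm \<sigma> polar_cylinder_if_horiz_sq_le[OF \<delta>]]
    J1_polar_iff[OF adm polar_cylinder_if_horiz_sq_le[OF \<delta>]] \<sigma> by auto

lemma smooth_cx_subvariety_linear:
  fixes c :: complex
  shows "smooth_cx_subvariety D {w \<in> D. snd w + fst w * c = 0}"
proof -
  define F where "F w = snd w + fst w * c" for w :: "complex \<times> complex"
  have F: "bounded_linear F" unfolding F_def
    by (intro bounded_linear_add bounded_linear_snd
        bounded_linear_compose[OF bounded_linear_mult_left bounded_linear_fst])
  have "closedin (top_of_set D) {w \<in> D. F w = 0}"
    using continuous_closedin_preimage_constant[OF linear_continuous_on[OF F]] by blast
  moreover have "F (0, 1) \<noteq> 0" by (simp add: F_def)
  moreover have "F (k * v1, k * v2) = k * F (v1, v2)" for k v1 v2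
    by (simp add: F_def algebra_simps)
  ultimately show ?thesis
    unfolding smooth_cx_subvariety_def F_def[symmetric]
    by (intro conjI ballI exI[of _ UNIV] exI[of _ F] exI[of _ "\<lambda>_. F"])
       (auto simp: bounded_linear_imp_has_derivative[OF F] fun_eq_iff)
qed

lemma cx_chart_graph_iff:
  assumes \<sigma>: "\<sigma> = 1 \<or> \<sigma> = -1"
  shows "snd (cx_chart (q, p)) + fst (cx_chart (q, p)) * (\<i> * of_real \<sigma>) = 0
         \<longleftrightarrow> p$1 = \<sigma> * q$2 \<and> p$2 = - \<sigma> * q$1"
  using \<sigma> by (auto simp: cx_chart_def complex_eq_iff)

lemma cx_subvariety_TE_graph:
  assumes \<sigma>: "\<sigma> = 1 \<or> \<sigma> = -1"
  shows "cx_subvariety_TE {(q, p). horiz_sq q \<le> r \<and> (q$3 = 1 \<or> q$3 = -1) \<and> p$3 = 0}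
           {(q, p). horiz_sq q \<le> r \<and> q$3 = \<sigma> \<and> p = vector [\<sigma> * q$2, - \<sigma> * q$1, 0]}"
  (is "cx_subvariety_TE ?T ?X")
proof -
  let ?c = "\<i> * complex_of_real \<sigma>"
  have graph: "{qp \<in> ?X. fst qp $ 3 = \<sigma>} =
    {qp \<in> ?T. fst qp $ 3 = \<sigma> \<and> snd (cx_chart qp) + fst (cx_chart qp) * ?c = 0}"
  proof (intro set_eqI)
    fix qp :: "(real^3) \<times> (real^3)"
    show "qp \<in> {qp \<in> ?X. fst qp $ 3 = \<sigma>} \<longleftrightarrow>
      qp \<in> {qp \<in> ?T. fst qp $ 3 = \<sigma> \<and> snd (cx_chart qp) + fst (cx_chart qp) * ?c = 0}"
      using \<sigma> by (cases qp) (auto simp: cx_chart_graph_iff[OF \<sigma>] vec3_eq_iff)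
  qed
  have "smooth_cx_subvariety (cx_chart ` {qp \<in> ?T. fst qp $ 3 = \<tau>}) (cx_chart ` {qp \<in> ?X. fst qp $ 3 = \<tau>})"
    for \<tau>
  proof (cases "\<tau> = \<sigma>")
    case True
    have "cx_chart ` {qp \<in> ?X. fst qp $ 3 = \<tau>} =
      {w \<in> cx_chart ` {qp \<in> ?T. fst qp $ 3 = \<tau>}. snd w + fst w * ?c = 0}"
      unfolding True graph by auto
    thus ?thesis by (simp add: smooth_cx_subvariety_linear)
  next
    case False
    hence "cx_chart ` {qp \<in> ?X. fst qp $ 3 = \<tau>} = {}" by auto
    moreover have "smooth_cx_subvariety D {}" for D unfolding smooth_cx_subvariety_def by simp
    ultimately show ?thesis by (simp only:)
  qed
  moreover have "?X \<subseteq> ?T" using \<sigma> by auto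
  ultimately show ?thesis unfolding cx_subvariety_TE_def by blast
qed

theorem lemma3p7:
  fixes \<delta>0 :: real and S :: "(real^3) set" and \<nu> :: "real^3 \<Rightarrow> real^3" and \<sigma> :: real
  assumes "\<delta>0 > 0"
    and "admissible_S \<delta>0 S \<nu>"
    and "\<sigma> = 1 \<or> \<sigma> = -1"
  shows "transversal_in (J1 S \<nu>) (Hset S \<nu> \<sigma>)
           ((subtopology euclidean (J1 S \<nu>)) frontier_of (TEz S \<nu> \<delta>0 2))
       \<and> reeb_invariant (J1 S \<nu>) (Hset S \<nu> \<sigma> \<inter> TEz S \<nu> \<delta>0 2)
       \<and> cx_subvariety_TE (proj ` TEz S \<nu> \<delta>0 2) (proj ` (Hset S \<nu> \<sigma> \<inter> TEz S \<nu> \<delta>0 2))"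
  using transversal_Hset_frontier_TEz[OF assms(2,1,3)] reeb_invariant_Hset_TEz[OF assms(2,1,3)]
    cx_subvariety_TE_graph[OF assms(3)]
  unfolding proj_TEz_eq[OF assms(2,1)] proj_Hset_TEz_eq[OF assms(2,1,3)] by blast

end
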